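(* Let $\mathcal G$ be the game induced by an SG-LCS, $x\in\{0,1\}$, and let $T\subseteq S$ be a regular set of configurations. There exist regular SG-LCS strategies $\mathtt{force}^x(\mathcal G,T)$ for Player $x$ and $\mathtt{avoid}^{1-x}(\mathcal G,T)$ for Player $1-x$ such that $\mathrm{Force}^x(\mathcal G,T)\subseteq W^x(\widehat{\mathtt{force}^x(\mathcal G,T)},F^{1-x}_{all}(\mathcal G))(\mathcal G,(\Diamond T)^{>0})$ and $\mathrm{Avoid}^{1-x}(\mathcal G,T)\subseteq V^{1-x}(\widehat{\mathtt{avoid}^{1-x}(\mathcal G,T)},F^{x}_{all}(\mathcal G))(\mathcal G,\Box(S\setminus T))$.
   Context: An SG-LCS is a tuple $\mathcal L=(\mathtt S,\mathtt S^0,\mathtt S^1,\mathtt C,\mathtt M,\mathtt T,\lambda,\mathrm{Col})$: $\mathtt S$ finite set of control states partitioned into $\mathtt S^0,\mathtt S^1$; $\mathtt C$ finite set of channels; $\mathtt M$ finite message alphabet; $\mathtt T$ finite set of transitions $\mathtt s\xrightarrow{op}\mathtt s'$ with $op\in\{c!m,c?m,\mathtt{nop}\}$; $0<\lambda<1$; $\mathrm{Col}$ a coloring of control states. The induced game $\mathcal G=(S,S^0,S^1,S^R,\to,P,\mathrm{Col})$ has $S=\mathtt S\times(\mathtt M^* )^{\mathtt C}\times\{0,1\}$, $S^x=\mathtt S^x\times(\mathtt M^* )^{\mathtt C}\times\{1\}$, $S^R=\mathtt S\times(\mathtt M^* )^{\mathtt C}\times\{0\}$; $(\mathtt s,\mathtt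 x,1)\to(\mathtt s',\mathtt x',0)$ iff there is $\mathtt s\xrightarrow{op}\mathtt s'$ in $\mathtt T$ with $\mathtt x'=\mathtt x$ if $op=\mathtt{nop}$, $\mathtt x'=\mathtt x[c\mapsto\mathtt x(c)\cdot m]$ if $op=c!m$, $\mathtt x(c)=m\cdot w$ and $\mathtt x'=\mathtt x[c\mapsto w]$ if $op=c?m$ (if no such successor, $(\mathtt s,\mathtt x,1)\to(\mathtt s,\mathtt x,0)$ is added); $(\mathtt s,\mathtt x,0)\to(\mathtt s,\mathtt x',1)$ for every componentwise subword $\mathtt x'$ of $\mathtt x$, with probability $P$ induced by losing each message independently with probability $\lambda$. Write $\mathrm{Pre}(Q)=\{s:\exists s'\in Q,\ s\to s'\}$, $\widetilde{\mathrm{Pre}}(Q)=S\setminus\mathrm{Pre}(S\setminus Q)$. Force sets: $R_0=T$, $R_{\alpha+1}=R_\alpha\cup(S^R\cap\mathrm{Pre}(R_\alpha))\cup(S^x\cap\mathrm{Pre}(R_\alpha))\cup(S^{1-x}\cap\widetilde{\mathrm{Pre}}(R_\alpha))$, $R_\lambda=\bigcup_{\alpha<\lambda}R_\alpha$; with $\gamma$ least such that $R_{\gamma+1}=R_\gamma$, $\mathrm{Force}^x(\mathcal G,T)=R_\gamma$ and $\mathrm{Avoid}^{1-x}(\mathcal G,T)=S\setminus R_\gamma$. A set of channel contents is regular if it is a finite union of products $\prod_cL_c$ of regular languages; a set of configurations $P$ is regular if each $\{\mathtt x:(\mathtt s,\mathtt x,i)\in P\}$ is regular. A regular SG-LCS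 strategy for Player $y$ is a finite list of guarded rules $(\mathtt s_i,X_i\xrightarrow{op_i}\mathtt s_i')$ with $X_i$ regular, $\mathtt s_i\xrightarrow{op_i}\mathtt s_i'\in\mathtt T$, $\mathtt s_i\in\mathtt S^y$, if $op_i=c?m$ then every $\mathtt x\in X_i$ has $\mathtt x(c)$ beginning with $m$, and guards with the same control state disjoint; its induced memoryless partial strategy $\hat{\mathtt f}$ maps $(\mathtt s_i,\mathtt x,1)$ with $\mathtt x\in X_i$ to the configuration reached via $\mathtt s_i\xrightarrow{op_i}\mathtt s_i'$, undefined elsewhere. Strategies of Player $y$ are partial functions from finite paths ending in $S^y$ to successors; $F^y_{all}(\mathcal G)$ is the set of all of them. For total strategies and initial configuration $s$, $\mathcal P_{\mathcal G,s,f^0,f^1}$ is the induced probability measure on runs; for partial strategies a probability statement must hold for all total extensions. $W^x(f,F)(\mathcal G,\varphi^{>0})=\{s:\mathcal P_{\mathcal G,s,f,g}(\varphi)>0$ for all total $g\in F\}$; $V^{y}(f,F)(\mathcal G,\varphi)$ is the set of $s$ such that for all $g\in F$ every run from $s$ consistent with $f$ and $g$ satisfies $\varphi$. $\Diamond T$: the run visits $T$; $\Box Q$: the run stays in $Q$. *)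

theory Defs
  imports "HOL-Probability.Probability" "HOL-Library.Sublist"
begin

datatype ('c, 'm) lcs_op = Send 'c 'm | Recv 'c 'm | Nop

record ('s, 'c, 'm) sglcs =
  states  :: "'s set"
  states0 :: "'s set"
  states1 :: "'s set"
  trans   :: "('s \<times> ('c, 'm) lcs_op \<times> 's) set"
  lam     :: real
  col     :: "'s \<Rightarrow> nat"

definition wf_sglcs :: "('s, 'c::finite, 'm::finite) sglcs \<Rightarrow> bool" where
  "wf_sglcs L \<longleftrightarrow> finite (states L) \<and> states0 L \<inter> states1 L = {} \<and>
     states0 L \<union> states1 L = states L \<and> finite (trans L) \<and>
     trans L \<subseteq> states L \<times> UNIV \<times> states L \<and> 0 < lam L \<and> lam L < 1"

text \<open>Configurations (s, x, b): b = True encodes 1 (player), b = False encodes 0 (random).\<close>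
type_synonym ('s, 'c, 'm) conf = "'s \<times> ('c \<Rightarrow> 'm list) \<times> bool"

fun op_rel :: "('c, 'm) lcs_op \<Rightarrow> ('c \<Rightarrow> 'm list) \<Rightarrow> ('c \<Rightarrow> 'm list) \<Rightarrow> bool" where
  "op_rel Nop x x' \<longleftrightarrow> x' = x"
| "op_rel (Send c m) x x' \<longleftrightarrow> x' = x(c := x c @ [m])"
| "op_rel (Recv c m) x x' \<longleftrightarrow> (\<exists>w. x c = m # w \<and> x' = x(c := w))"

fun op_apply :: "('c, 'm) lcs_op \<Rightarrow> ('c \<Rightarrow> 'm list) \<Rightarrow> ('c \<Rightarrow> 'm list)" where
  "op_apply Nop x = x"
| "op_apply (Send c m) x = x(c := x c @ [m])"
| "op_apply (Recv c m) x = x(c := tl (x c))"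

definition confs :: "('s, 'c, 'm) sglcs \<Rightarrow> ('s, 'c, 'm) conf set" where
  "confs L = {(s, x, b). s \<in> states L}"

definition ctrl :: "('s, 'c, 'm) sglcs \<Rightarrow> nat \<Rightarrow> 's set" where
  "ctrl L y = (if y = 0 then states0 L else states1 L)"

definition pstates :: "('s, 'c, 'm) sglcs \<Rightarrow> nat \<Rightarrow> ('s, 'c, 'm) conf set" where
  "pstates L y = {(s, x, b). s \<in> ctrl L y \<and> b}"

definition rstates :: "('s, 'c, 'm) sglcs \<Rightarrow> ('s, 'c, 'm) conf set" where
  "rstates L = {(s, x, b). s \<in> states L \<and> \<not> b}"

definition edge :: "('s, 'c, 'm) sglcs \<Rightarrow> ('s, 'c, 'm) conf \<Rightarrow> ('s, 'c, 'm) conf \<Rightarrow> bool" where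
  "edge L c c' \<longleftrightarrow>
    (\<exists>s x s' x'. c = (s, x, True) \<and> c' = (s', x', False) \<and> s \<in> states L \<and>
       ((\<exists>op. (s, op, s') \<in> trans L \<and> op_rel op x x') \<or>
        ((\<nexists>op t v. (s, op, t) \<in> trans L \<and> op_rel op x v) \<and> s' = s \<and> x' = x))) \<or>
    (\<exists>s x x'. c = (s, x, False) \<and> c' = (s, x', True) \<and> s \<in> states L \<and>
       (\<forall>ch. subseq (x' ch) (x ch)))"

fun lose :: "real \<Rightarrow> 'm list \<Rightarrow> 'm list pmf" where
  "lose p [] = return_pmf []"
| "lose p (m # w) = bernoulli_pmf p \<bind> (\<lambda>lost. lose p w \<bind> (\<lambda>w'. return_pmf (if lost then w' else m # w')))"

definition lossy :: "('s, 'c::finite, 'm) sglcs \<Rightarrow> ('s, 'c, 'm) conf \<Rightarrow> ('s, 'c, 'm) conf pmf" where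
  "lossy L c = (case c of (s, x, b) \<Rightarrow>
     map_pmf (\<lambda>x'. (s, x', True)) (Pi_pmf UNIV [] (\<lambda>ch. lose (lam L) (x ch))))"

definition Pre :: "('s, 'c, 'm) sglcs \<Rightarrow> ('s, 'c, 'm) conf set \<Rightarrow> ('s, 'c, 'm) conf set" where
  "Pre L Q = {c \<in> confs L. \<exists>c' \<in> Q. edge L c c'}"

definition tPre :: "('s, 'c, 'm) sglcs \<Rightarrow> ('s, 'c, 'm) conf set \<Rightarrow> ('s, 'c, 'm) conf set" where
  "tPre L Q = confs L - Pre L (confs L - Q)"

text \<open>The transfinite sequence R_alpha is increasing and stabilises at the least fixed point
  of the (monotone) one-step operator, which is how Force is defined here.\<close>
definition Force :: "('s, 'c, 'm) sglcs \<Rightarrow> nat \<Rightarrow> ('s, 'c, 'm) conf set \<Rightarrow> ('s, 'c, 'm) conf set" where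
  "Force L x T = lfp (\<lambda>R. T \<union> R \<union> (rstates L \<inter> Pre L R) \<union> (pstates L x \<inter> Pre L R)
                          \<union> (pstates L (1 - x) \<inter> tPre L R))"

definition Avoid :: "('s, 'c, 'm) sglcs \<Rightarrow> nat \<Rightarrow> ('s, 'c, 'm) conf set \<Rightarrow> ('s, 'c, 'm) conf set" where
  "Avoid L x T = confs L - Force L x T"

definition regular_lang :: "'m list set \<Rightarrow> bool" where
  "regular_lang A \<longleftrightarrow> (\<exists>(Q :: nat set) q0 \<delta> F. finite Q \<and> q0 \<in> Q \<and> (\<forall>q\<in>Q. \<forall>a. \<delta> q a \<in> Q) \<and>
       F \<subseteq> Q \<and> A = {w. foldl \<delta> q0 w \<in> F})"

definition regular_contents :: "('c \<Rightarrow> 'm list) set \<Rightarrow> bool" where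
  "regular_contents X \<longleftrightarrow> (\<exists>Ls :: ('c \<Rightarrow> 'm list set) set. finite Ls \<and>
       (\<forall>Lc \<in> Ls. \<forall>c. regular_lang (Lc c)) \<and> X = (\<Union>Lc \<in> Ls. {x. \<forall>c. x c \<in> Lc c}))"

definition regular_confs :: "('s, 'c, 'm) conf set \<Rightarrow> bool" where
  "regular_confs P \<longleftrightarrow> (\<forall>s b. regular_contents {x. (s, x, b) \<in> P})"

type_synonym ('s, 'c, 'm) strategy = "('s, 'c, 'm) conf list \<Rightarrow> ('s, 'c, 'm) conf option"

definition is_strategy :: "('s, 'c, 'm) sglcs \<Rightarrow> nat \<Rightarrow> ('s, 'c, 'm) strategy \<Rightarrow> bool" where
  "is_strategy L y f \<longleftrightarrow> (\<forall>h c. f h = Some c \<longrightarrow> h \<noteq> [] \<and> last h \<in> pstates L y \<and> edge L (last h) c)"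

definition total_strategy :: "('s, 'c, 'm) sglcs \<Rightarrow> nat \<Rightarrow> ('s, 'c, 'm) strategy \<Rightarrow> bool" where
  "total_strategy L y f \<longleftrightarrow> is_strategy L y f \<and> (\<forall>h. h \<noteq> [] \<and> last h \<in> pstates L y \<longrightarrow> f h \<noteq> None)"

definition extends_strategy :: "('s, 'c, 'm) strategy \<Rightarrow> ('s, 'c, 'm) strategy \<Rightarrow> bool" where
  "extends_strategy f f' \<longleftrightarrow> (\<forall>h c. f h = Some c \<longrightarrow> f' h = Some c)"

type_synonym ('s, 'c, 'm) rule = "'s \<times> ('c \<Rightarrow> 'm list) set \<times> ('c, 'm) lcs_op \<times> 's"

definition regular_strategy :: "('s, 'c, 'm) sglcs \<Rightarrow> nat \<Rightarrow> ('s, 'c, 'm) rule list \<Rightarrow> bool" where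
  "regular_strategy L y rs \<longleftrightarrow>
     (\<forall>(s, X, op, s') \<in> set rs. regular_contents X \<and> (s, op, s') \<in> trans L \<and> s \<in> ctrl L y \<and>
        (\<forall>c m. op = Recv c m \<longrightarrow> (\<forall>x \<in> X. \<exists>w. x c = m # w))) \<and>
     (\<forall>i < length rs. \<forall>j < length rs. i \<noteq> j \<longrightarrow> fst (rs ! i) = fst (rs ! j) \<longrightarrow>
        fst (snd (rs ! i)) \<inter> fst (snd (rs ! j)) = {})"

definition induced_strategy :: "('s, 'c, 'm) rule list \<Rightarrow> ('s, 'c, 'm) strategy" where
  "induced_strategy rs h = (if h = [] then None else
     (case last h of (s, x, b) \<Rightarrow>
        if \<not> b then None else
        (case find (\<lambda>(s', X, op, t). s' = s \<and> x \<in> X) rs of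
           None \<Rightarrow> None
         | Some (_, _, op, t) \<Rightarrow> Some (t, op_apply op x, False))))"

text \<open>reach_n n h: probability, under the strategy profile sigma (sigma y is the strategy of
  Player y), of visiting T within n further steps, starting from history h.\<close>
fun reach_n :: "('s, 'c::finite, 'm) sglcs \<Rightarrow> (nat \<Rightarrow> ('s, 'c, 'm) strategy) \<Rightarrow> ('s, 'c, 'm) conf set
     \<Rightarrow> nat \<Rightarrow> ('s, 'c, 'm) conf list \<Rightarrow> real" where
  "reach_n L \<sigma> T 0 h = (if last h \<in> T then 1 else 0)"
| "reach_n L \<sigma> T (Suc n) h =
     (if last h \<in> T then 1 else
      (case last h of (s, x, b) \<Rightarrow>
        if \<not> b then measure_pmf.expectation (lossy L (last h)) (\<lambda>c. reach_n L \<sigma> T n (h @ [c]))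
        else reach_n L \<sigma> T n (h @ [the (\<sigma> (if s \<in> states0 L then 0 else 1) h)])))"

text \<open>P_{G,s,f^x,g^{1-x}}(Diamond T) (continuity of measure: supremum over step bounds).\<close>
definition reach_prob :: "('s, 'c::finite, 'm) sglcs \<Rightarrow> nat \<Rightarrow> ('s, 'c, 'm) strategy \<Rightarrow> ('s, 'c, 'm) strategy
     \<Rightarrow> ('s, 'c, 'm) conf set \<Rightarrow> ('s, 'c, 'm) conf \<Rightarrow> real" where
  "reach_prob L x f g T s = (SUP n. reach_n L (\<lambda>y. if y = x then f else g) T n [s])"

text \<open>W^x(f, F^{1-x}_all)(G, (Diamond T)^{>0}) -- for partial f, required for all total extensions.\<close>
definition W_reach :: "('s, 'c::finite, 'm) sglcs \<Rightarrow> nat \<Rightarrow> ('s, 'c, 'm) strategy \<Rightarrow> ('s, 'c, 'm) conf set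
     \<Rightarrow> ('s, 'c, 'm) conf set" where
  "W_reach L x f T = {s \<in> confs L. \<forall>f' g. total_strategy L x f' \<and> extends_strategy f f' \<and>
       total_strategy L (1 - x) g \<longrightarrow> reach_prob L x f' g T s > 0}"

definition consistent_run :: "('s, 'c, 'm) sglcs \<Rightarrow> ('s, 'c, 'm) strategy \<Rightarrow> (nat \<Rightarrow> ('s, 'c, 'm) conf) \<Rightarrow> bool" where
  "consistent_run L f \<rho> \<longleftrightarrow> (\<forall>i c. f (map \<rho> [0..<Suc i]) = Some c \<longrightarrow> \<rho> (Suc i) = c)"

definition is_run :: "('s, 'c, 'm) sglcs \<Rightarrow> ('s, 'c, 'm) conf \<Rightarrow> (nat \<Rightarrow> ('s, 'c, 'm) conf) \<Rightarrow> bool" where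
  "is_run L s \<rho> \<longleftrightarrow> \<rho> 0 = s \<and> (\<forall>i. edge L (\<rho> i) (\<rho> (Suc i)))"

definition V_safe :: "('s, 'c, 'm) sglcs \<Rightarrow> nat \<Rightarrow> ('s, 'c, 'm) strategy \<Rightarrow> ('s, 'c, 'm) conf set
     \<Rightarrow> ('s, 'c, 'm) conf set" where
  "V_safe L y f Q = {s \<in> confs L. \<forall>g. is_strategy L (1 - y) g \<longrightarrow>
       (\<forall>\<rho>. is_run L s \<rho> \<and> consistent_run L f \<rho> \<and> consistent_run L g \<rho> \<longrightarrow> (\<forall>i. \<rho> i \<in> Q))}"

end

theory Submission
  imports Defs "HOL-Library.Ramsey"
begin

text \<open>
  \<open>Force\<close> is the least fixpoint of the one-step attractor operator. The random configurations
  added by the iterates form upward closed sets in the subword ordering, so by Higman's lemma the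
  iteration stabilises after finitely many steps. Regular sets of channel contents are closed under
  the Boolean operations, upward closure and preimages of channel operations, hence every iterate
  and therefore \<open>Force\<close> itself is regular.

  Player \<open>x\<close> reaches \<open>T\<close> with positive probability by always taking a transition that lowers
  the rank (the first iterate containing the configuration): random steps lower it with positive
  probability, since every subword survives the message losses with positive probability. The
  opponent stays outside \<open>Force\<close> by always taking a transition that avoids it, which exists by the
  fixpoint property.
\<close>

definition good :: "('a \<Rightarrow> 'a \<Rightarrow> bool) \<Rightarrow> (nat \<Rightarrow> 'a) \<Rightarrow> bool" where
  "good P f \<longleftrightarrow> (\<exists>i j. i < j \<and> P (f i) (f j))"

lemma minimal_extension_sequence:
  fixes B :: "(nat \<Rightarrow> 'a) \<Rightarrow> bool" and sz :: "'a \<Rightarrow> nat"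
  assumes "B f"
  obtains m where "\<And>n. \<exists>g. B g \<and> (\<forall>i<n. g i = m i)"
    and "\<And>g n. B g \<Longrightarrow> (\<forall>i<n. g i = m i) \<Longrightarrow> sz (m n) \<le> sz (g n)"
proof -
  define ext where "ext p g \<longleftrightarrow> B g \<and> (\<forall>i<length p. g i = p ! i)" for p g
  define least where "least p = (ARG_MIN (\<lambda>g. sz (g (length p))) g. ext p g)" for p
  define pre where "pre n = ((\<lambda>p. p @ [least p (length p)]) ^^ n) []" for n
  have pre_Suc: "pre (Suc n) = pre n @ [least (pre n) (length (pre n))]" for n
    by (simp add: pre_def)
  have len: "length (pre n) = n" for n
    by (induction n) (simp_all add: pre_def)
  have least: "ext p (least p) \<and> (\<forall>g. ext p g \<longrightarrow> sz (least p (length p)) \<le> sz (g (length p)))"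
    if "ext p g" for p g
    unfolding least_def by (rule arg_min_nat_lemma[where P = "ext p", OF that])
  have ext_pre: "\<exists>g. ext (pre n) g" for n
  proof (induction n)
    case 0
    show ?case using assms by (auto simp: ext_def pre_def)
  next
    case (Suc n)
    then obtain g where "ext (pre n) g" by blast
    then have "ext (pre (Suc n)) (least (pre n))"
      using least by (auto simp: ext_def pre_Suc nth_append less_Suc_eq)
    then show ?case by blast
  qed
  define m where "m i = pre (Suc i) ! i" for i
  have pre_nth: "pre n ! i = m i" if "i < n" for n i
    using that
  proof (induction n)
    case (Suc n)
    then show ?case by (cases "i = n") (auto simp: m_def pre_Suc nth_append len)
  qed simp
  have ext_m: "ext (pre n) g \<longleftrightarrow> B g \<and> (\<forall>i<n. g i = m i)" for n g
    by (auto simp: ext_def len pre_nth)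
  show thesis
  proof
    show "\<exists>g. B g \<and> (\<forall>i<n. g i = m i)" for n
      using ext_pre ext_m by blast
  next
    fix g n assume "B g" "\<forall>i<n. g i = m i"
    then have "ext (pre n) g" by (simp add: ext_m)
    moreover have "m n = least (pre n) n" by (simp add: m_def pre_Suc nth_append len)
    ultimately show "sz (m n) \<le> sz (g n)" using least len by metis
  qed
qed

lemma minimal_bad_sequence:
  fixes sz :: "'a \<Rightarrow> nat"
  assumes "\<not> good P f"
  obtains m where "\<not> good P m"
    and "\<And>g n. \<not> good P g \<Longrightarrow> (\<forall>i<n. g i = m i) \<Longrightarrow> sz (m n) \<le> sz (g n)"
proof -
  obtain m where prefix: "\<And>n. \<exists>g. \<not> good P g \<and> (\<forall>i<n. g i = m i)"
    and minimal: "\<And>g n. \<not> good P g \<Longrightarrow> (\<forall>i<n. g i = m i) \<Longrightarrow> sz (m n) \<le> sz (g n)"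
    using minimal_extension_sequence[where B = "\<lambda>g. \<not> good P g" and sz = sz, OF assms] by blast
  have "\<not> P (m i) (m j)" if "i < j" for i j
  proof -
    obtain g where "\<not> good P g" "\<forall>i'<Suc j. g i' = m i'"
      using prefix by blast
    then show ?thesis
      using that unfolding good_def by (metis less_SucI lessI)
  qed
  then show thesis
    using that minimal unfolding good_def by blast
qed

lemma bad_after_taking_tails:
  fixes m :: "nat \<Rightarrow> 'a list"
  assumes bad: "\<not> good subseq m" and nonempty: "\<And>i. m i \<noteq> []"
    and e_mono: "strict_mono e" and e_hd: "\<And>n. hd (m (e n)) = a"
  shows "\<not> good subseq (\<lambda>i. if i < e 0 then m i else tl (m (e (i - e 0))))" (is "\<not> good subseq ?g")
proof -
  define k where "k = e 0"
  define idx where "idx i = (if i < k then i else e (i - k))" for i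
  have g: "?g i = (if i < k then m i else tl (m (idx i)))" for i
    by (simp add: idx_def k_def)
  have idx_mono: "idx i < idx j" if "i < j" for i j
    using that e_mono strict_mono_less_eq[OF e_mono, of 0 "j - k"]
    by (auto simp: idx_def k_def strict_mono_less)
  have "subseq (m (idx i)) (m (idx j))" if "subseq (?g i) (?g j)" "i < j" for i j
  proof (cases "j < k")
    case False
    have "subseq (?g j) (m (idx j))"
      using False by (cases "m (idx j)") (auto simp: g)
    show ?thesis
    proof (cases "i < k")
      case True
      then show ?thesis
        using subseq_order.order_trans[OF that(1) \<open>subseq (?g j) (m (idx j))\<close>]
        by (simp add: g idx_def)
    next
      case i: False
      have "hd (m (idx i)) = hd (m (idx j))"
        using i False e_hd by (simp add: idx_def)
      then show ?thesis
        using that(1) i False nonempty[of "idx i"] nonempty[of "idx j"]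
        by (cases "m (idx i)"; cases "m (idx j)") (auto simp: g)
    qed
  qed (use that in \<open>simp add: g idx_def\<close>)
  then show ?thesis
    using bad idx_mono unfolding good_def by blast
qed

theorem higman: "good subseq (f :: nat \<Rightarrow> 'a::finite list)"
proof (rule ccontr)
  assume "\<not> good subseq f"
  then obtain m :: "nat \<Rightarrow> 'a list" where bad: "\<not> good subseq m"
    and minimal: "\<And>g n. \<not> good subseq g \<Longrightarrow> (\<forall>i<n. g i = m i) \<Longrightarrow> length (m n) \<le> length (g n)"
    using minimal_bad_sequence[where sz = length] by blast
  have nonempty: "m i \<noteq> []" for i
    using bad unfolding good_def by (metis lessI list_emb_Nil)
  \<comment> \<open>Infinitely many \<open>m i\<close> start with the same letter \<open>a\<close>; replacing them by their tails from the
    first such index \<open>e 0\<close> on gives a bad sequence that is shorter at \<open>e 0\<close>.\<close>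
  obtain a where inf: "infinite ((\<lambda>i. hd (m i)) -` {a})"
    using inf_img_fin_domE[of "\<lambda>i. hd (m i)" UNIV] by auto
  define e where "e = enumerate ((\<lambda>i. hd (m i)) -` {a})"
  have e_mono: "strict_mono e"
    unfolding e_def using enumerate_mono[OF _ inf] by (rule strict_monoI)
  have e_hd: "hd (m (e n)) = a" for n
    using enumerate_in_set[OF inf, of n] by (simp add: e_def)
  show False
    using minimal[OF bad_after_taking_tails[OF bad nonempty e_mono e_hd], of "e 0"] nonempty[of "e 0"]
    by (cases "m (e 0)") simp_all
qed

lemma subseq_chain_in_infinite_set:
  fixes f :: "nat \<Rightarrow> 'a::finite list"
  assumes "infinite I"
  obtains J where "J \<subseteq> I" "infinite J" "\<forall>i\<in>J. \<forall>j\<in>J. i < j \<longrightarrow> subseq (f i) (f j)"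
proof -
  define colour where "colour X = (if subseq (f (Min X)) (f (Max X)) then 0 else 1 :: nat)" for X
  have colour_pair: "colour {i, j} = (if subseq (f i) (f j) then 0 else 1)" if "i < j" for i j
    using that by (simp add: colour_def)
  have "\<forall>i\<in>I. \<forall>j\<in>I. i \<noteq> j \<longrightarrow> colour {i, j} < 2"
    by (simp add: colour_def)
  from Ramsey2[OF assms this] obtain J t where J: "J \<subseteq> I" "infinite J"
    and mono: "\<forall>i\<in>J. \<forall>j\<in>J. i \<noteq> j \<longrightarrow> colour {i, j} = t"
    by blast
  have chain: "subseq (f i) (f j) \<longleftrightarrow> t = 0" if "i \<in> J" "j \<in> J" "i < j" for i j
    using mono that colour_pair[OF \<open>i < j\<close>] by (metis less_irrefl one_neq_zero)
  have "t = 0"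
  proof -
    obtain i j where "i < j" "subseq (f (enumerate J i)) (f (enumerate J j))"
      using higman[of "f \<circ> enumerate J"] by (auto simp: good_def)
    then show ?thesis
      using chain enumerate_in_set[OF J(2)] enumerate_mono[OF _ J(2)] by blast
  qed
  then show thesis using that J chain by blast
qed

lemma good_pointwise_subseq:
  "good (\<lambda>x y. \<forall>c. subseq (x c) (y c)) (f :: nat \<Rightarrow> 'c::finite \<Rightarrow> 'a::finite list)"
proof -
  have "\<exists>J. infinite J \<and> (\<forall>i\<in>J. \<forall>j\<in>J. i < j \<longrightarrow> (\<forall>c\<in>C. subseq (f i c) (f j c)))"
    if "finite C" for C :: "'c set"
    using that
  proof (induction C rule: finite_induct)
    case empty
    show ?case using infinite_UNIV_nat by blast
  next
    case (insert c C)
    then obtain J where J: "infinite J" "\<forall>i\<in>J. \<forall>j\<in>J. i < j \<longrightarrow> (\<forall>c\<in>C. subseq (f i c) (f j c))"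
      by blast
    obtain J' where J': "J' \<subseteq> J" "infinite J'" "\<forall>i\<in>J'. \<forall>j\<in>J'. i < j \<longrightarrow> subseq (f i c) (f j c)"
      by (rule subseq_chain_in_infinite_set[OF J(1), of "\<lambda>i. f i c"])
    have "\<forall>i\<in>J'. \<forall>j\<in>J'. i < j \<longrightarrow> (\<forall>c'\<in>insert c C. subseq (f i c') (f j c'))"
      using J(2) J'(1,3) by blast
    then show ?case using J'(2) by blast
  qed
  from this[OF finite[of UNIV]] obtain J
    where J: "infinite J" "\<forall>i\<in>J. \<forall>j\<in>J. i < j \<longrightarrow> (\<forall>c. subseq (f i c) (f j c))"
    by auto
  have "enumerate J 0 < enumerate J 1" "enumerate J 0 \<in> J" "enumerate J 1 \<in> J"
    using enumerate_in_set[OF J(1)] enumerate_mono[OF zero_less_one J(1)] by auto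
  then show ?thesis
    unfolding good_def using J(2) by blast
qed

lemma upclosed_chain_stabilises:
  fixes U :: "nat \<Rightarrow> ('c::finite \<Rightarrow> 'a::finite list) set"
  assumes mono: "\<And>n. U n \<subseteq> U (Suc n)"
    and upclosed: "\<And>n x y. x \<in> U n \<Longrightarrow> (\<forall>c. subseq (x c) (y c)) \<Longrightarrow> y \<in> U n"
  shows "\<exists>N. \<forall>n\<ge>N. U n = U N"
proof (rule ccontr)
  have U_mono: "m \<le> n \<Longrightarrow> U m \<subseteq> U n" for m n
    using lift_Suc_mono_le[of U, OF mono] by blast
  assume "\<not> ?thesis"
  then have "\<forall>N. \<exists>n y. N < n \<and> y \<in> U n \<and> y \<notin> U N"
    using U_mono by (metis le_neq_implies_less subset_antisym subsetI)
  then obtain succ y where succ: "\<And>N. N < succ N \<and> y N \<in> U (succ N) \<and> y N \<notin> U N"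
    by metis
  define k where "k i = (succ ^^ i) 0" for i
  have k_Suc: "k (Suc i) = succ (k i)" for i
    by (simp add: k_def)
  then have "strict_mono k"
    by (metis succ strict_monoI_Suc)
  obtain i j where "i < j" "\<forall>c. subseq (y (k i) c) (y (k j) c)"
    using good_pointwise_subseq[of "y \<circ> k"] by (auto simp: good_def)
  moreover have "y (k i) \<in> U (k j)"
    using succ[of "k i"] U_mono strict_mono_leD[OF \<open>strict_mono k\<close>, of "Suc i" j] \<open>i < j\<close>
    by (auto simp: k_Suc)
  ultimately show False
    using upclosed succ[of "k j"] by blast
qed

lemma foldl_closed: "\<forall>q\<in>Q. \<forall>a. \<delta> q a \<in> Q \<Longrightarrow> q \<in> Q \<Longrightarrow> foldl \<delta> q w \<in> Q"
  by (induction w arbitrary: q) auto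

lemma regular_langI:
  fixes \<delta> :: "'q \<Rightarrow> 'm \<Rightarrow> 'q"
  assumes "finite Q" "q0 \<in> Q" "\<forall>q\<in>Q. \<forall>a. \<delta> q a \<in> Q" "F \<subseteq> Q"
    and "A = {w. foldl \<delta> q0 w \<in> F}"
  shows "regular_lang A"
proof -
  obtain \<iota> :: "'q \<Rightarrow> nat" where inj: "inj_on \<iota> Q"
    using finite_imp_inj_to_nat_seg[OF assms(1)] by blast
  define \<delta>' where "\<delta>' i a = \<iota> (\<delta> (the_inv_into Q \<iota> i) a)" for i a
  have foldl_\<iota>: "foldl \<delta>' (\<iota> q) w = \<iota> (foldl \<delta> q w)" if "q \<in> Q" for q w
    using that
  proof (induction w arbitrary: q)
    case (Cons a w)
    then show ?case using inj assms(3) by (simp add: \<delta>'_def the_inv_into_f_f)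
  qed simp
  have "A = {w. foldl \<delta>' (\<iota> q0) w \<in> \<iota> ` F}"
    using assms(4,5) foldl_\<iota>[OF assms(2)] foldl_closed[OF assms(3,2)] inj
    by (auto simp: inj_on_image_mem_iff)
  moreover have "\<forall>q\<in>\<iota> ` Q. \<forall>a. \<delta>' q a \<in> \<iota> ` Q"
    using assms(3) inj by (auto simp: \<delta>'_def the_inv_into_f_f)
  ultimately show ?thesis
    unfolding regular_lang_def using assms(1,2,4)
    by (intro exI[of _ "\<iota> ` Q"] exI[of _ "\<iota> q0"] exI[of _ \<delta>'] exI[of _ "\<iota> ` F"]) auto
qed

lemma regular_langE:
  assumes "regular_lang A"
  obtains Q :: "nat set" and q0 \<delta> F where "finite Q" "q0 \<in> Q" "\<forall>q\<in>Q. \<forall>a. \<delta> q a \<in> Q" "F \<subseteq> Q"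
    "A = {w. foldl \<delta> q0 w \<in> F}"
  using assms unfolding regular_lang_def by blast

lemma regular_lang_UNIV: "regular_lang UNIV"
  by (rule regular_langI[of "{()}" "()" "\<lambda>_ _. ()" "{()}"]) auto

lemma regular_lang_Compl: "regular_lang A \<Longrightarrow> regular_lang (- A)"
proof (elim regular_langE)
  fix Q :: "nat set" and q0 \<delta> F
  assume "finite Q" "q0 \<in> Q" "\<forall>q\<in>Q. \<forall>a. \<delta> q a \<in> Q" "F \<subseteq> Q" "A = {w. foldl \<delta> q0 w \<in> F}"
  then show "regular_lang (- A)"
    by (intro regular_langI[of Q q0 \<delta> "Q - F"]) (auto simp: foldl_closed)
qed

lemma regular_lang_Int: "regular_lang A \<Longrightarrow> regular_lang B \<Longrightarrow> regular_lang (A \<inter> B)"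
proof (elim regular_langE)
  fix Q Q' :: "nat set" and q0 q0' \<delta> \<delta>' F F'
  assume "finite Q" "q0 \<in> Q" "\<forall>q\<in>Q. \<forall>a. \<delta> q a \<in> Q" "F \<subseteq> Q" "A = {w. foldl \<delta> q0 w \<in> F}"
    and "finite Q'" "q0' \<in> Q'" "\<forall>q\<in>Q'. \<forall>a. \<delta>' q a \<in> Q'" "F' \<subseteq> Q'" "B = {w. foldl \<delta>' q0' w \<in> F'}"
  moreover define d where "d pq a = (\<delta> (fst pq) a, \<delta>' (snd pq) a)" for pq a
  moreover have "foldl d (p, q) w = (foldl \<delta> p w, foldl \<delta>' q w)" for p q w
    by (induction w arbitrary: p q) (simp_all add: d_def)
  ultimately show "regular_lang (A \<inter> B)"
    by (intro regular_langI[of "Q \<times> Q'" "(q0, q0')" d "F \<times> F'"]) auto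
qed

lemma regular_lang_snoc_preimage: "regular_lang A \<Longrightarrow> regular_lang {w. w @ [m] \<in> A}"
proof (elim regular_langE)
  fix Q :: "nat set" and q0 \<delta> F
  assume "finite Q" "q0 \<in> Q" "\<forall>q\<in>Q. \<forall>a. \<delta> q a \<in> Q" "F \<subseteq> Q" "A = {w. foldl \<delta> q0 w \<in> F}"
  then show "regular_lang {w. w @ [m] \<in> A}"
    by (intro regular_langI[of Q q0 \<delta> "{q\<in>Q. \<delta> q m \<in> F}"]) (auto simp: foldl_closed)
qed

lemma regular_lang_Cons_image: "regular_lang A \<Longrightarrow> regular_lang ((#) m ` A)"
proof (elim regular_langE)
  fix Q :: "nat set" and q0 \<delta> F
  assume Q: "finite Q" "q0 \<in> Q" "\<forall>q\<in>Q. \<forall>a. \<delta> q a \<in> Q" "F \<subseteq> Q" "A = {w. foldl \<delta> q0 w \<in> F}"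
  \<comment> \<open>\<open>None\<close> is the initial state, \<open>Some None\<close> a rejecting sink.\<close>
  define d where "d s a = (case s of
      None \<Rightarrow> Some (if a = m then Some q0 else None)
    | Some None \<Rightarrow> Some None
    | Some (Some q) \<Rightarrow> Some (Some (\<delta> q a)))" for s a
  have run: "foldl d (Some (Some q)) w = Some (Some (foldl \<delta> q w))" for q w
    by (induction w arbitrary: q) (simp_all add: d_def)
  have sink: "foldl d (Some None) w = Some None" for w
    by (induction w) (simp_all add: d_def)
  have "(#) m ` A = {v. foldl d None v \<in> Some ` Some ` F}"
  proof (intro set_eqI iffI)
    fix v assume "v \<in> {v. foldl d None v \<in> Some ` Some ` F}"
    then show "v \<in> (#) m ` A"
      by (cases v) (auto simp: d_def run sink Q(5) split: if_splits)
  qed (auto simp: d_def run Q(5))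
  then show "regular_lang ((#) m ` A)"
    using Q(1-4)
    by (intro regular_langI[of "{None, Some None} \<union> Some ` Some ` Q" None d "Some ` Some ` F"])
       (auto simp: d_def split: option.splits)
qed

lemma subseq_Cons_right_iff:
  "subseq v (a # w) \<longleftrightarrow> subseq v w \<or> (\<exists>v'. v = a # v' \<and> subseq v' w)"
  by (cases v) (auto intro: subseq_Cons')

lemma foldl_skip_letters:
  "foldl (\<lambda>S a. S \<union> (\<lambda>q. \<delta> q a) ` S) S w = {foldl \<delta> q v | q v. q \<in> S \<and> subseq v w}"
proof (induction w arbitrary: S)
  case Nil
  show ?case by (auto dest: list_emb_Nil2) (metis foldl_Nil list_emb_Nil)
next
  case (Cons a w)
  define S' where "S' = S \<union> (\<lambda>q. \<delta> q a) ` S"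
  have "foldl (\<lambda>S a. S \<union> (\<lambda>q. \<delta> q a) ` S) S (a # w) = {foldl \<delta> q v | q v. q \<in> S' \<and> subseq v w}"
    using Cons by (simp add: S'_def)
  also have "\<dots> = {foldl \<delta> q v | q v. q \<in> S \<and> subseq v (a # w)}"
  proof (intro set_eqI iffI)
    fix z assume "z \<in> {foldl \<delta> q v | q v. q \<in> S' \<and> subseq v w}"
    then obtain q v where z: "z = foldl \<delta> q v" "q \<in> S'" "subseq v w"
      by blast
    show "z \<in> {foldl \<delta> q v | q v. q \<in> S \<and> subseq v (a # w)}"
    proof (cases "q \<in> S")
      case True
      moreover have "subseq v (a # w)" using z(3) by (rule list_emb_Cons)
      ultimately show ?thesis using z(1) by blast
    next
      case False
      then obtain p where "p \<in> S" "q = \<delta> p a" using z(2) by (auto simp: S'_def)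
      then show ?thesis using z by (intro CollectI exI[of _ p] exI[of _ "a # v"]) simp
    qed
  next
    fix z assume "z \<in> {foldl \<delta> q v | q v. q \<in> S \<and> subseq v (a # w)}"
    then obtain q v where z: "z = foldl \<delta> q v" "q \<in> S" "subseq v (a # w)"
      by blast
    show "z \<in> {foldl \<delta> q v | q v. q \<in> S' \<and> subseq v w}"
    proof (cases "subseq v w")
      case True
      then show ?thesis
        using z(1,2) by (intro CollectI exI[of _ q] exI[of _ v]) (simp add: S'_def)
    next
      case False
      then obtain v' where "v = a # v'" "subseq v' w"
        using z(3) unfolding subseq_Cons_right_iff by blast
      then show ?thesis
        using z(1,2) by (intro CollectI exI[of _ "\<delta> q a"] exI[of _ v']) (simp add: S'_def)
    qed
  qed
  finally show ?case .
qed

lemma regular_lang_up_closure: "regular_lang A \<Longrightarrow> regular_lang {w. \<exists>v\<in>A. subseq v w}"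
proof (elim regular_langE)
  fix Q :: "nat set" and q0 \<delta> F
  assume Q: "finite Q" "q0 \<in> Q" "\<forall>q\<in>Q. \<forall>a. \<delta> q a \<in> Q" "F \<subseteq> Q" "A = {w. foldl \<delta> q0 w \<in> F}"
  define d where "d S a = S \<union> (\<lambda>q. \<delta> q a) ` S" for S a
  have closed: "\<forall>S\<in>Pow Q. \<forall>a. d S a \<in> Pow Q"
    using Q(3) by (auto simp: d_def)
  have eq: "{w. \<exists>v\<in>A. subseq v w} = {w. foldl d {q0} w \<in> {S\<in>Pow Q. S \<inter> F \<noteq> {}}}"
    using foldl_closed[OF closed, of "{q0}"] Q(2)
    by (auto simp: d_def[abs_def] foldl_skip_letters Q(5))
  show "regular_lang {w. \<exists>v\<in>A. subseq v w}"
    by (rule regular_langI[OF _ _ closed _ eq]) (use Q(1,2) in auto)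
qed

definition prod_contents :: "('c \<Rightarrow> 'm list set) \<Rightarrow> ('c \<Rightarrow> 'm list) set" where
  "prod_contents Lc = {x. \<forall>c. x c \<in> Lc c}"

definition up_closure :: "('c \<Rightarrow> 'm list) set \<Rightarrow> ('c \<Rightarrow> 'm list) set" where
  "up_closure X = {y. \<exists>x\<in>X. \<forall>c. subseq (x c) (y c)}"

definition op_preimage :: "('c, 'm) lcs_op \<Rightarrow> ('c \<Rightarrow> 'm list) set \<Rightarrow> ('c \<Rightarrow> 'm list) set" where
  "op_preimage op X = {x. \<exists>x'. op_rel op x x' \<and> x' \<in> X}"

lemma regular_contentsE:
  assumes "regular_contents X"
  obtains Ls where "finite Ls" "\<forall>Lc\<in>Ls. \<forall>c. regular_lang (Lc c)" "X = (\<Union>Lc\<in>Ls. prod_contents Lc)"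
  using assms unfolding regular_contents_def prod_contents_def by blast

lemma regular_contents_prod: "(\<And>c. regular_lang (Lc c)) \<Longrightarrow> regular_contents (prod_contents Lc)"
  unfolding regular_contents_def prod_contents_def by (intro exI[of _ "{Lc}"]) auto

lemma regular_contents_empty: "regular_contents {}"
  unfolding regular_contents_def by (intro exI[of _ "{}"]) auto

lemma regular_contents_UNIV: "regular_contents UNIV"
  using regular_contents_prod[of "\<lambda>_. UNIV"] regular_lang_UNIV by (simp add: prod_contents_def)

lemma regular_contents_Un:
  "regular_contents A \<Longrightarrow> regular_contents B \<Longrightarrow> regular_contents (A \<union> B)"
proof (elim regular_contentsE)
  fix Ls Ls'
  assume "finite Ls" "\<forall>Lc\<in>Ls. \<forall>c. regular_lang (Lc c)" "A = (\<Union>Lc\<in>Ls. prod_contents Lc)"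
    and "finite Ls'" "\<forall>Lc\<in>Ls'. \<forall>c. regular_lang (Lc c)" "B = (\<Union>Lc\<in>Ls'. prod_contents Lc)"
  then show "regular_contents (A \<union> B)"
    unfolding regular_contents_def prod_contents_def by (intro exI[of _ "Ls \<union> Ls'"]) auto
qed

lemma regular_contents_UN:
  "finite I \<Longrightarrow> (\<And>i. i \<in> I \<Longrightarrow> regular_contents (X i)) \<Longrightarrow> regular_contents (\<Union>i\<in>I. X i)"
  by (induction I rule: finite_induct) (auto intro: regular_contents_Un regular_contents_empty)

lemma regular_contents_Int:
  "regular_contents A \<Longrightarrow> regular_contents B \<Longrightarrow> regular_contents (A \<inter> B)"
proof (elim regular_contentsE)
  fix Ls Ls'
  assume Ls: "finite Ls" "\<forall>Lc\<in>Ls. \<forall>c. regular_lang (Lc c)" "A = (\<Union>Lc\<in>Ls. prod_contents Lc)"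
    and Ls': "finite Ls'" "\<forall>Lc\<in>Ls'. \<forall>c. regular_lang (Lc c)" "B = (\<Union>Lc\<in>Ls'. prod_contents Lc)"
  have "A \<inter> B = (\<Union>(Lc, Lc')\<in>Ls \<times> Ls'. prod_contents (\<lambda>c. Lc c \<inter> Lc' c))"
    using Ls(3) Ls'(3) by (auto simp: prod_contents_def)
  moreover have "regular_contents (prod_contents (\<lambda>c. Lc c \<inter> Lc' c))" if "Lc \<in> Ls" "Lc' \<in> Ls'" for Lc Lc'
    using that Ls(2) Ls'(2) by (intro regular_contents_prod regular_lang_Int) auto
  ultimately show "regular_contents (A \<inter> B)"
    using Ls(1) Ls'(1) by (auto intro: regular_contents_UN)
qed

lemma regular_contents_INT:
  "finite I \<Longrightarrow> (\<And>i. i \<in> I \<Longrightarrow> regular_contents (X i)) \<Longrightarrow> regular_contents (\<Inter>i\<in>I. X i)"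
  by (induction I rule: finite_induct) (auto intro: regular_contents_Int regular_contents_UNIV)

lemma regular_contents_Compl:
  fixes X :: "('c::finite \<Rightarrow> 'm list) set"
  shows "regular_contents X \<Longrightarrow> regular_contents (- X)"
proof (elim regular_contentsE)
  fix Ls assume Ls: "finite Ls" "\<forall>Lc\<in>Ls. \<forall>c. regular_lang (Lc c)" "X = (\<Union>Lc\<in>Ls. prod_contents Lc)"
  \<comment> \<open>De Morgan: a product is left exactly when one component leaves its language.\<close>
  have "- X = (\<Inter>Lc\<in>Ls. \<Union>c. prod_contents (\<lambda>d. if d = c then - Lc c else UNIV))"
    using Ls(3) by (auto simp: prod_contents_def)
  moreover have "regular_contents (\<Union>c. prod_contents (\<lambda>d. if d = c then - Lc c else UNIV))"
    if "Lc \<in> Ls" for Lc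
    using that Ls(2)
    by (intro regular_contents_UN regular_contents_prod) (auto intro: regular_lang_Compl regular_lang_UNIV)
  ultimately show "regular_contents (- X)"
    using Ls(1) by (auto intro: regular_contents_INT)
qed

lemma regular_contents_Diff:
  fixes A :: "('c::finite \<Rightarrow> 'm list) set"
  shows "regular_contents A \<Longrightarrow> regular_contents B \<Longrightarrow> regular_contents (A - B)"
  by (simp add: Diff_eq regular_contents_Int regular_contents_Compl)

lemma up_closure_prod_contents:
  "up_closure (prod_contents Lc) = prod_contents (\<lambda>c. {w. \<exists>v\<in>Lc c. subseq v w})"
proof (intro set_eqI iffI)
  fix y assume "y \<in> prod_contents (\<lambda>c. {w. \<exists>v\<in>Lc c. subseq v w})"
  then have "\<forall>c. \<exists>v. v \<in> Lc c \<and> subseq v (y c)"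
    by (auto simp: prod_contents_def)
  then obtain x where "\<forall>c. x c \<in> Lc c \<and> subseq (x c) (y c)"
    by metis
  then show "y \<in> up_closure (prod_contents Lc)"
    by (auto simp: up_closure_def prod_contents_def)
qed (auto simp: up_closure_def prod_contents_def)

lemma regular_contents_up_closure: "regular_contents X \<Longrightarrow> regular_contents (up_closure X)"
proof (elim regular_contentsE)
  fix Ls assume Ls: "finite Ls" "\<forall>Lc\<in>Ls. \<forall>c. regular_lang (Lc c)" "X = (\<Union>Lc\<in>Ls. prod_contents Lc)"
  have "up_closure X = (\<Union>Lc\<in>Ls. up_closure (prod_contents Lc))"
    using Ls(3) by (auto simp: up_closure_def)
  then show "regular_contents (up_closure X)"
    using Ls(1,2)
    by (auto simp: up_closure_prod_contents intro!: regular_contents_UN regular_contents_prod regular_lang_up_closure)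
qed

lemma op_preimage_prod_contents:
  "op_preimage op (prod_contents Lc) = prod_contents (case op of
      Send c m \<Rightarrow> Lc(c := {w. w @ [m] \<in> Lc c})
    | Recv c m \<Rightarrow> Lc(c := (#) m ` Lc c)
    | Nop \<Rightarrow> Lc)"
proof (cases op)
  case (Recv c m)
  have "op_preimage op (prod_contents Lc) = prod_contents (Lc(c := (#) m ` Lc c))"
  proof (intro set_eqI iffI)
    fix x assume "x \<in> op_preimage op (prod_contents Lc)"
    then obtain w where w: "x c = m # w" "x(c := w) \<in> prod_contents Lc"
      by (auto simp: op_preimage_def Recv)
    have upd: "(x(c := w)) d \<in> Lc d" for d
      using w(2) by (simp add: prod_contents_def)
    have "x d \<in> (Lc(c := (#) m ` Lc c)) d" for d
      using upd[of d] upd[of c] w(1) by (cases "d = c") auto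
    then show "x \<in> prod_contents (Lc(c := (#) m ` Lc c))"
      by (simp add: prod_contents_def)
  next
    fix x assume "x \<in> prod_contents (Lc(c := (#) m ` Lc c))"
    then have x: "x d \<in> (Lc(c := (#) m ` Lc c)) d" for d
      by (simp add: prod_contents_def)
    obtain w where w: "x c = m # w" "w \<in> Lc c"
      using x[of c] by auto
    have "(x(c := w)) d \<in> Lc d" for d
      using x[of d] w by (cases "d = c") auto
    then have "op_rel op x (x(c := w)) \<and> x(c := w) \<in> prod_contents Lc"
      using w by (simp add: Recv prod_contents_def)
    then show "x \<in> op_preimage op (prod_contents Lc)"
      by (auto simp: op_preimage_def)
  qed
  then show ?thesis using Recv by simp
qed (auto simp: op_preimage_def prod_contents_def)

lemma regular_contents_op_preimage: "regular_contents X \<Longrightarrow> regular_contents (op_preimage op X)"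
proof (elim regular_contentsE)
  fix Ls assume Ls: "finite Ls" "\<forall>Lc\<in>Ls. \<forall>c. regular_lang (Lc c)" "X = (\<Union>Lc\<in>Ls. prod_contents Lc)"
  have "op_preimage op X = (\<Union>Lc\<in>Ls. op_preimage op (prod_contents Lc))"
    using Ls(3) by (auto simp: op_preimage_def)
  moreover have "regular_contents (op_preimage op (prod_contents Lc))" if "Lc \<in> Ls" for Lc
    unfolding op_preimage_prod_contents using that Ls(2)
    by (cases op) (auto intro!: regular_contents_prod regular_lang_snoc_preimage regular_lang_Cons_image)
  ultimately show "regular_contents (op_preimage op X)"
    using Ls(1) by (auto intro: regular_contents_UN)
qed

text \<open>Rule \<open>i\<close> takes transition \<open>ts ! i\<close> on the contents in its guard not already claimed by an
  earlier rule of the same control state, which makes the guards disjoint.\<close>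
definition guarded_rules :: "('s \<times> ('c, 'm) lcs_op \<times> 's) list \<Rightarrow> ('s \<times> ('c, 'm) lcs_op \<times> 's \<Rightarrow> ('c \<Rightarrow> 'm list) set)
    \<Rightarrow> ('s, 'c, 'm) rule list" where
  "guarded_rules ts G = map (\<lambda>i. (fst (ts ! i),
      G (ts ! i) - (\<Union>j\<in>{j. j < i \<and> fst (ts ! j) = fst (ts ! i)}. G (ts ! j)), snd (ts ! i))) [0..<length ts]"

lemma regular_strategy_guarded_rules:
  fixes G :: "'s \<times> ('c::finite, 'm) lcs_op \<times> 's \<Rightarrow> ('c \<Rightarrow> 'm list) set"
  assumes ts: "set ts \<subseteq> {t \<in> trans L. fst t \<in> ctrl L y}"
    and regular: "\<And>t. t \<in> set ts \<Longrightarrow> regular_contents (G t)"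
    and enabled: "\<And>s op s'. (s, op, s') \<in> set ts \<Longrightarrow> G (s, op, s') \<subseteq> op_preimage op UNIV"
  shows "regular_strategy L y (guarded_rules ts G)"
  unfolding regular_strategy_def
proof (intro conjI ballI allI impI)
  fix r assume "r \<in> set (guarded_rules ts G)"
  then obtain i where i: "i < length ts"
    and r: "r = (fst (ts ! i), G (ts ! i) - (\<Union>j\<in>{j. j < i \<and> fst (ts ! j) = fst (ts ! i)}. G (ts ! j)), snd (ts ! i))"
    by (auto simp: guarded_rules_def)
  obtain s op s' where t: "ts ! i = (s, op, s')" by (cases "ts ! i")
  have "(s, op, s') \<in> set ts" using i t nth_mem by metis
  moreover have "finite {j. j < i \<and> fst (ts ! j) = fst (ts ! i)}" by simp
  ultimately show "case r of (s, X, op, s') \<Rightarrow> regular_contents X \<and> (s, op, s') \<in> trans L \<and> s \<in> ctrl L y \<and>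
        (\<forall>c m. op = Recv c m \<longrightarrow> (\<forall>x \<in> X. \<exists>w. x c = m # w))"
    using ts enabled[of s op s'] i
    by (auto simp: r t op_preimage_def intro!: regular_contents_Diff regular_contents_UN regular) force
next
  fix i j assume "i < length (guarded_rules ts G)" "j < length (guarded_rules ts G)" "i \<noteq> j"
    "fst (guarded_rules ts G ! i) = fst (guarded_rules ts G ! j)"
  then show "fst (snd (guarded_rules ts G ! i)) \<inter> fst (snd (guarded_rules ts G ! j)) = {}"
    by (cases "i < j") (auto simp: guarded_rules_def)
qed

lemma induced_strategy_guarded_rules_SomeD:
  fixes ts :: "('s \<times> ('c, 'm) lcs_op \<times> 's) list"
  assumes "induced_strategy (guarded_rules ts G) h = Some c'" "last h = (s, w, True)"
  shows "\<exists>op s'. (s, op, s') \<in> set ts \<and> w \<in> G (s, op, s') \<and> c' = (s', op_apply op w, False)"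
proof -
  define P :: "('s, 'c, 'm) rule \<Rightarrow> bool" where "P = (\<lambda>(s', X, op, t). s' = s \<and> w \<in> X)"
  obtain r where r: "find P (guarded_rules ts G) = Some r"
    and c': "c' = (case r of (_, _, op, t) \<Rightarrow> (t, op_apply op w, False))"
    using assms by (auto simp: induced_strategy_def P_def split: if_splits option.splits)
  then obtain i where i: "i < length ts" "P (guarded_rules ts G ! i)" "r = guarded_rules ts G ! i"
    by (auto simp: find_Some_iff guarded_rules_def)
  obtain op s' where t: "ts ! i = (s, op, s')" and "w \<in> G (ts ! i)"
    using i(2) by (cases "ts ! i") (auto simp: P_def guarded_rules_def i(1))
  moreover have "c' = (s', op_apply op w, False)"
    using c' i by (simp add: guarded_rules_def t)
  ultimately show ?thesis using i(1) nth_mem by metis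
qed

lemma induced_strategy_guarded_rules_defined:
  assumes "h \<noteq> []" "last h = (s, w, True)" "(s, op, s') \<in> set ts" "w \<in> G (s, op, s')"
  shows "induced_strategy (guarded_rules ts G) h \<noteq> None"
proof -
  define Q where "Q i \<longleftrightarrow> i < length ts \<and> fst (ts ! i) = s \<and> w \<in> G (ts ! i)" for i
  have "\<exists>i. Q i" using assms(3,4) by (auto simp: Q_def in_set_conv_nth)
  then obtain i where "Q i" and least: "\<And>j. j < i \<Longrightarrow> \<not> Q j"
    by (metis exists_least_iff)
  then have "guarded_rules ts G ! i \<in> set (guarded_rules ts G)"
    and "fst (guarded_rules ts G ! i) = s" "w \<in> fst (snd (guarded_rules ts G ! i))"
    using least[unfolded Q_def] by (auto simp: Q_def guarded_rules_def)
  then have "find (\<lambda>(s', X, op, t). s' = s \<and> w \<in> X) (guarded_rules ts G) \<noteq> None"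
    unfolding find_None_iff by (metis (mono_tags, lifting) case_prod_conv prod.collapse)
  then show ?thesis
    using assms(1,2) by (auto simp: induced_strategy_def split: option.splits)
qed

lemma pmf_expectation_bounds:
  fixes M :: "'a pmf"
  assumes "\<forall>y\<in>set_pmf M. 0 \<le> f y \<and> f y \<le> (1::real)"
  shows "integrable M f" "0 \<le> measure_pmf.expectation M f" "measure_pmf.expectation M f \<le> 1"
proof -
  show int: "integrable M f"
    by (rule measure_pmf.integrable_const_bound[where B = 1]) (use assms in \<open>auto simp: AE_measure_pmf_iff\<close>)
  show "0 \<le> measure_pmf.expectation M f"
    by (rule integral_nonneg_AE) (use assms in \<open>auto simp: AE_measure_pmf_iff\<close>)
  show "measure_pmf.expectation M f \<le> 1"
    by (rule measure_pmf.integral_le_const[OF int]) (use assms in \<open>auto simp: AE_measure_pmf_iff\<close>)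
qed

lemma pmf_expectation_pos:
  fixes M :: "'a pmf"
  assumes "\<forall>y\<in>set_pmf M. 0 \<le> f y \<and> f y \<le> (1::real)" "y \<in> set_pmf M" "0 < f y"
  shows "0 < measure_pmf.expectation M f"
proof -
  note bounds = pmf_expectation_bounds[OF assms(1)]
  have "measure_pmf.expectation M f \<noteq> 0"
  proof
    assume "measure_pmf.expectation M f = 0"
    then have "AE y in M. f y = 0"
      using integral_nonneg_eq_0_iff_AE[OF bounds(1)] assms(1) by (auto simp: AE_measure_pmf_iff)
    then show False using assms(2,3) by (auto simp: AE_measure_pmf_iff)
  qed
  then show ?thesis using bounds(2) by simp
qed

lemma reach_n_bounds: "0 \<le> reach_n L \<sigma> T n h \<and> reach_n L \<sigma> T n h \<le> 1"
proof (induction n arbitrary: h)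
  case (Suc n)
  then show ?case
    using pmf_expectation_bounds(2,3)[of "lossy L (last h)" "\<lambda>c. reach_n L \<sigma> T n (h @ [c])"]
    by (auto split: prod.splits)
qed simp

lemma reach_n_pos_ranked:
  fixes R :: "nat \<Rightarrow> ('s, 'c::finite, 'm) conf set"
  assumes "R 0 = {}"
    and random: "\<And>k h s w. h \<noteq> [] \<Longrightarrow> last h = (s, w, False) \<Longrightarrow> last h \<in> R (Suc k) - R k - T \<Longrightarrow>
      \<exists>c'\<in>R k. c' \<in> set_pmf (lossy L (last h))"
    and player: "\<And>k h s w. h \<noteq> [] \<Longrightarrow> last h = (s, w, True) \<Longrightarrow> last h \<in> R (Suc k) - R k - T \<Longrightarrow>
      \<exists>c'\<in>R k. \<sigma> (if s \<in> states0 L then 0 else 1) h = Some c'"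
  shows "h \<noteq> [] \<Longrightarrow> last h \<in> R k \<Longrightarrow> k \<le> n \<Longrightarrow> 0 < reach_n L \<sigma> T n h"
proof (induction k arbitrary: h n)
  case 0
  then show ?case using assms(1) by simp
next
  case (Suc k)
  then obtain n' where n: "n = Suc n'" and "k \<le> n'" by (cases n) auto
  then have IH: "0 < reach_n L \<sigma> T n' (h @ [c'])" if "c' \<in> R k" for c'
    using Suc.IH that by simp
  obtain s w b where c: "last h = (s, w, b)" by (cases "last h")
  consider "last h \<in> T" | "last h \<in> R k" | "last h \<in> R (Suc k) - R k - T"
    using Suc.prems by blast
  then show ?case
  proof cases
    case 1
    then show ?thesis by (simp add: n)
  next
    case 2
    then show ?thesis using Suc by simp
  next
    case 3
    show ?thesis
    proof (cases b)
      case False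
      then have "last h = (s, w, False)" using c by simp
      from random[OF Suc.prems(1) this 3]
      obtain c' where "c' \<in> R k" "c' \<in> set_pmf (lossy L (last h))" by blast
      then have "0 < measure_pmf.expectation (lossy L (last h)) (\<lambda>c. reach_n L \<sigma> T n' (h @ [c]))"
        by (intro pmf_expectation_pos[where y = c']) (simp_all add: reach_n_bounds IH)
      then show ?thesis using 3 c False by (simp add: n)
    next
      case True
      then have "last h = (s, w, True)" using c by simp
      from player[OF Suc.prems(1) this 3]
      obtain c' where "c' \<in> R k" "\<sigma> (if s \<in> states0 L then 0 else 1) h = Some c'" by blast
      then show ?thesis using IH 3 c True by (simp add: n)
    qed
  qed
qed

lemma reach_prob_pos:
  assumes "0 < reach_n L (\<lambda>y. if y = x then f else g) T n [c]"
  shows "0 < reach_prob L x f g T c"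
proof -
  have "bdd_above (range (\<lambda>n. reach_n L (\<lambda>y. if y = x then f else g) T n [c]))"
    by (intro bdd_aboveI[of _ 1]) (auto simp: reach_n_bounds)
  then show ?thesis
    unfolding reach_prob_def using assms by (meson cSUP_upper UNIV_I less_le_trans)
qed

lemma op_rel_op_apply: "op_rel op w w' \<Longrightarrow> w' = op_apply op w"
  by (cases op) auto

lemma lose_set_pmf: "0 < p \<Longrightarrow> p < 1 \<Longrightarrow> subseq w' w \<Longrightarrow> w' \<in> set_pmf (lose p w)"
proof (induction w arbitrary: w')
  case Nil
  then show ?case by (auto dest: list_emb_Nil2)
next
  case (Cons m w)
  have coin: "set_pmf (bernoulli_pmf p) = UNIV"
    using Cons.prems by (simp add: set_pmf_bernoulli)
  from \<open>subseq w' (m # w)\<close> consider "subseq w' w" | v where "w' = m # v" "subseq v w"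
    unfolding subseq_Cons_right_iff by blast
  then show ?case
  proof cases
    case 1
    then show ?thesis
      using Cons coin by (auto simp: set_bind_pmf intro!: bexI[of _ True] bexI[of _ w'])
  next
    case (2 v)
    then show ?thesis
      using Cons coin by (auto simp: set_bind_pmf intro!: bexI[of _ False] bexI[of _ v])
  qed
qed

definition slice :: "('s, 'c, 'm) conf set \<Rightarrow> 's \<Rightarrow> bool \<Rightarrow> ('c \<Rightarrow> 'm list) set" where
  "slice R s b = {x. (s, x, b) \<in> R}"

lemma regular_confs_iff_slice: "regular_confs R \<longleftrightarrow> (\<forall>s b. regular_contents (slice R s b))"
  by (simp add: regular_confs_def slice_def)

lemma regular_confs_Un: "regular_confs A \<Longrightarrow> regular_confs B \<Longrightarrow> regular_confs (A \<union> B)"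
  unfolding regular_confs_def by (simp add: Collect_disj_eq regular_contents_Un)

lemma regular_confs_Int: "regular_confs A \<Longrightarrow> regular_confs B \<Longrightarrow> regular_confs (A \<inter> B)"
  unfolding regular_confs_def by (simp add: Collect_conj_eq regular_contents_Int)

lemma regular_confs_Diff:
  fixes A :: "('s, 'c::finite, 'm) conf set"
  assumes "regular_confs A" "regular_confs B"
  shows "regular_confs (A - B)"
proof -
  have "{x. (s, x, b) \<in> A - B} = {x. (s, x, b) \<in> A} - {x. (s, x, b) \<in> B}" for s b
    by auto
  then show ?thesis
    using assms unfolding regular_confs_def by (simp add: regular_contents_Diff)
qed

lemma regular_confs_control: "regular_confs {(s, x, b). P s b}"
  unfolding regular_confs_def by (simp add: regular_contents_UNIV regular_contents_empty)

locale sglcs_game =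
  fixes L :: "('s, 'c::finite, 'm::finite) sglcs"
  assumes wf: "wf_sglcs L"
begin

lemma edge_confs: "edge L c c' \<Longrightarrow> c \<in> confs L \<and> c' \<in> confs L"
  using wf unfolding wf_sglcs_def edge_def confs_def by auto

lemma Pre_eq: "Pre L R = {c. \<exists>c'\<in>R. edge L c c'}"
  by (auto simp: Pre_def dest: edge_confs)

lemma edge_random_iff:
  "edge L (s, w, False) c' \<longleftrightarrow> s \<in> states L \<and> (\<exists>w'. c' = (s, w', True) \<and> (\<forall>ch. subseq (w' ch) (w ch)))"
  by (auto simp: edge_def)

lemma edge_player_iff:
  "edge L (s, w, True) c' \<longleftrightarrow> s \<in> states L \<and>
    ((\<exists>op s' w'. (s, op, s') \<in> trans L \<and> op_rel op w w' \<and> c' = (s', w', False)) \<or>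
     ((\<nexists>op t v. (s, op, t) \<in> trans L \<and> op_rel op w v) \<and> c' = (s, w, False)))"
  unfolding edge_def by blast

lemma edge_player_to_random: "edge L (s, w, True) c' \<Longrightarrow> c' \<in> rstates L"
  using edge_confs[of "(s, w, True)" c'] by (auto simp: edge_player_iff rstates_def confs_def)

lemma lossy_set_pmf: "edge L (s, w, False) c' \<Longrightarrow> c' \<in> set_pmf (lossy L (s, w, False))"
proof -
  assume "edge L (s, w, False) c'"
  then obtain w' where c': "c' = (s, w', True)" and sub: "\<forall>ch. subseq (w' ch) (w ch)"
    by (auto simp: edge_random_iff)
  have "0 < lam L" "lam L < 1"
    using wf by (auto simp: wf_sglcs_def)
  then have "w' ch \<in> set_pmf (lose (lam L) (w ch))" for ch
    using lose_set_pmf sub by blast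
  then have "pmf (lose (lam L) (w ch)) (w' ch) \<noteq> 0" for ch
    by (simp add: set_pmf_iff)
  then have "w' \<in> set_pmf (Pi_pmf UNIV [] (\<lambda>ch. lose (lam L) (w ch)))"
    by (simp add: set_pmf_iff pmf_Pi)
  then show ?thesis
    using c' by (simp add: lossy_def)
qed

definition blocked :: "'s \<Rightarrow> ('c \<Rightarrow> 'm list) set" where
  "blocked s = (\<Inter>(s0, op, s')\<in>{t \<in> trans L. fst t = s}. - op_preimage op UNIV)"

lemma blocked_iff: "w \<in> blocked s \<longleftrightarrow> (\<nexists>op t v. (s, op, t) \<in> trans L \<and> op_rel op w v)"
  by (auto simp: blocked_def op_preimage_def)

lemma slice_Pre_random:
  "slice (Pre L R) s False = (if s \<in> states L then up_closure (slice R s True) else {})"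
  by (auto simp: slice_def Pre_eq edge_random_iff up_closure_def)

lemma slice_Pre_player:
  "slice (Pre L R) s True = (if s \<in> states L then
     (\<Union>(s0, op, s')\<in>{t \<in> trans L. fst t = s}. op_preimage op (slice R s' False)) \<union>
     (blocked s \<inter> slice R s False) else {})"
proof -
  have "(s, w, True) \<in> Pre L R \<longleftrightarrow> s \<in> states L \<and>
    ((\<exists>op s' w'. (s, op, s') \<in> trans L \<and> op_rel op w w' \<and> (s', w', False) \<in> R) \<or>
     (w \<in> blocked s \<and> (s, w, False) \<in> R))" for w
    unfolding Pre_eq mem_Collect_eq Bex_def edge_player_iff blocked_iff by blast
  then show ?thesis
    by (intro set_eqI) (simp add: slice_def op_preimage_def; blast)
qed

lemma regular_confs_Pre:
  assumes "regular_confs R"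
  shows "regular_confs (Pre L R)"
proof -
  have trans_from: "finite {t \<in> trans L. fst t = s}" for s
    using wf by (simp add: wf_sglcs_def)
  have "regular_contents (blocked s)" for s
    unfolding blocked_def using trans_from
    by (auto intro!: regular_contents_INT regular_contents_Compl regular_contents_op_preimage regular_contents_UNIV)
  then have "regular_contents (slice (Pre L R) s b)" for s b
    using assms trans_from unfolding regular_confs_iff_slice
    by (cases b) (auto simp: slice_Pre_random slice_Pre_player
        intro!: regular_contents_Un regular_contents_UN regular_contents_Int regular_contents_op_preimage
          regular_contents_up_closure regular_contents_empty)
  then show ?thesis
    by (simp add: regular_confs_iff_slice)
qed

lemma regular_confs_confs: "regular_confs (confs L)"
  unfolding confs_def by (rule regular_confs_control)

lemma regular_confs_tPre: "regular_confs R \<Longrightarrow> regular_confs (tPre L R)"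
  unfolding tPre_def by (intro regular_confs_Diff regular_confs_Pre regular_confs_confs)

end

locale force_game = sglcs_game L for L :: "('s, 'c::finite, 'm::finite) sglcs" +
  fixes x :: nat and T :: "('s, 'c, 'm) conf set"
  assumes player_x: "x \<in> {0, 1}" and T_confs: "T \<subseteq> confs L" and regular_T: "regular_confs T"
begin

lemma ctrl_cases: "s \<in> states L \<Longrightarrow> s \<in> ctrl L x \<or> s \<in> ctrl L (1 - x)"
  using wf player_x by (auto simp: wf_sglcs_def ctrl_def)

lemma ctrl_disjoint: "s \<in> ctrl L x \<Longrightarrow> s \<notin> ctrl L (1 - x)"
  using wf player_x by (auto simp: wf_sglcs_def ctrl_def)

lemma mover_eq: "s \<in> ctrl L y \<Longrightarrow> y \<in> {0, 1} \<Longrightarrow> (if s \<in> states0 L then 0 else 1) = y"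
  using wf by (auto simp: wf_sglcs_def ctrl_def)

definition force_step :: "('s, 'c, 'm) conf set \<Rightarrow> ('s, 'c, 'm) conf set" where
  "force_step R = T \<union> R \<union> (rstates L \<inter> Pre L R) \<union> (pstates L x \<inter> Pre L R) \<union> (pstates L (1 - x) \<inter> tPre L R)"

text \<open>\<open>force_iter (Suc k)\<close> is the paper's \<open>R\<^sub>k\<close>.\<close>
definition force_iter :: "nat \<Rightarrow> ('s, 'c, 'm) conf set" where
  "force_iter k = (force_step ^^ k) {}"

lemma Force_eq_lfp: "Force L x T = lfp force_step"
  by (simp add: Force_def force_step_def[abs_def])

lemma mono_force_step: "mono force_step"
  unfolding force_step_def Pre_def tPre_def by (rule monoI) blast

lemma force_step_Force: "force_step (Force L x T) = Force L x T"
  unfolding Force_eq_lfp by (rule lfp_fixpoint[OF mono_force_step])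

lemma T_subset_Force: "T \<subseteq> Force L x T"
  using force_step_Force unfolding force_step_def by blast

lemma force_iter_0: "force_iter 0 = {}"
  by (simp add: force_iter_def)

lemma force_iter_Suc: "force_iter (Suc k) = force_step (force_iter k)"
  by (simp add: force_iter_def)

lemma force_iter_mono: "j \<le> k \<Longrightarrow> force_iter j \<subseteq> force_iter k"
  by (rule lift_Suc_mono_le[of force_iter]) (auto simp: force_iter_Suc force_step_def)

lemma force_iter_subset_Force: "force_iter k \<subseteq> Force L x T"
proof (induction k)
  case (Suc k)
  then have "force_step (force_iter k) \<subseteq> force_step (Force L x T)"
    by (rule monoD[OF mono_force_step])
  then show ?case by (simp add: force_iter_Suc force_step_Force)
qed (simp add: force_iter_0)

lemma force_iter_confs: "force_iter k \<subseteq> confs L"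
  by (induction k) (use T_confs in \<open>auto simp: force_iter_0 force_iter_Suc force_step_def Pre_def tPre_def\<close>)

lemma regular_confs_force_iter: "regular_confs (force_iter k)"
proof (induction k)
  case 0
  show ?case by (simp add: force_iter_0 regular_confs_def regular_contents_empty)
next
  case (Suc k)
  then show ?case
    unfolding force_iter_Suc force_step_def rstates_def pstates_def
    by (intro regular_confs_Un regular_confs_Int regular_T regular_confs_control regular_confs_Pre
        regular_confs_tPre)
qed

lemma force_rank_unique:
  assumes "c \<in> force_iter (Suc j) - force_iter j" "c \<in> force_iter (Suc k) - force_iter k"
  shows "j = k"
  using assms force_iter_mono[of "Suc j" k] force_iter_mono[of "Suc k" j] by (cases j k rule: linorder_cases) auto

text \<open>Higman's lemma: the upward closed sets of random configurations with a successor in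
  \<open>force_iter k\<close> cannot grow forever.\<close>
lemma random_Pre_force_iter_stable: "\<exists>N. \<forall>k\<ge>N. rstates L \<inter> Pre L (force_iter k) \<subseteq> Pre L (force_iter N)"
proof -
  define U where "U k s = up_closure (slice (force_iter k) s True)" for k s
  have "\<exists>N. \<forall>k\<ge>N. U k s = U N s" for s
  proof (rule upclosed_chain_stabilises)
    show "U k s \<subseteq> U (Suc k) s" for k
      using force_iter_mono[of k "Suc k"] by (auto simp: U_def up_closure_def slice_def)
    show "v \<in> U k s" if "u \<in> U k s" "\<forall>c. subseq (u c) (v c)" for k u v
      using that by (auto simp: U_def up_closure_def intro: subseq_order.order_trans)
  qed
  then obtain Ns where Ns: "\<And>s k. Ns s \<le> k \<Longrightarrow> U k s = U (Ns s) s"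
    by metis
  define N where "N = Max (Ns ` states L)"
  have "Ns s \<le> N" if "s \<in> states L" for s
    using that wf by (auto simp: N_def wf_sglcs_def)
  then have "U k s = U N s" if "s \<in> states L" "N \<le> k" for s k
    using Ns[of s k] Ns[of s N] that by fastforce
  then have "rstates L \<inter> Pre L (force_iter k) \<subseteq> Pre L (force_iter N)" if "N \<le> k" for k
    using that slice_Pre_random[of "force_iter k"] slice_Pre_random[of "force_iter N"]
    by (fastforce simp: rstates_def slice_def U_def)
  then show ?thesis by blast
qed

lemma pstates_Pre_subset:
  assumes "rstates L \<inter> R' \<subseteq> R"
  shows "pstates L y \<inter> Pre L R' \<subseteq> Pre L R"
proof
  fix c assume "c \<in> pstates L y \<inter> Pre L R'"
  then obtain s w c' where "c = (s, w, True)" "c' \<in> R'" "edge L c c'"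
    by (auto simp: pstates_def Pre_eq)
  then show "c \<in> Pre L R"
    unfolding Pre_eq using assms edge_player_to_random by blast
qed

lemma pstates_tPre_subset:
  assumes "rstates L \<inter> R' \<subseteq> R"
  shows "pstates L y \<inter> tPre L R' \<subseteq> tPre L R"
proof
  fix c assume c: "c \<in> pstates L y \<inter> tPre L R'"
  then obtain s w where s: "c = (s, w, True)"
    by (auto simp: pstates_def)
  have "c' \<in> R" if "edge L c c'" for c'
  proof -
    have "c' \<in> R'"
      using c that edge_confs[OF that] unfolding tPre_def Pre_def by blast
    then show ?thesis
      using assms edge_player_to_random that s by blast
  qed
  then show "c \<in> tPre L R"
    using c by (auto simp: tPre_def Pre_def)
qed

lemma Force_eq_force_iter: "\<exists>M. Force L x T = force_iter M"
proof -
  obtain N where N: "\<And>k. N \<le> k \<Longrightarrow> rstates L \<inter> Pre L (force_iter k) \<subseteq> Pre L (force_iter N)"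
    using random_Pre_force_iter_stable by blast
  define R1 R2 where "R1 = force_iter (Suc N)" and "R2 = force_iter (Suc (Suc N))"
  have random_Pre: "rstates L \<inter> Pre L (force_iter k) \<subseteq> R1" if "N \<le> k" for k
    using N[OF that] by (auto simp: R1_def force_iter_Suc force_step_def)
  have "T \<subseteq> R1" by (auto simp: R1_def force_iter_Suc force_step_def)
  then have random_R2: "rstates L \<inter> R2 \<subseteq> R1"
    using random_Pre[of "Suc N"] by (auto simp: R2_def R1_def[symmetric] force_iter_Suc[of "Suc N"] force_step_def pstates_def rstates_def)
  have "R1 \<subseteq> R2"
    by (simp add: R1_def R2_def force_iter_mono)
  have R2_eq: "R2 = force_step R1"
    by (simp add: R1_def R2_def force_iter_Suc)
  have "rstates L \<inter> Pre L R2 \<subseteq> R2"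
    using random_Pre[of "Suc (Suc N)"] \<open>R1 \<subseteq> R2\<close> by (auto simp: R2_def)
  moreover have "pstates L x \<inter> Pre L R2 \<union> pstates L (1 - x) \<inter> tPre L R2 \<subseteq> R2"
    using pstates_Pre_subset[OF random_R2] pstates_tPre_subset[OF random_R2]
    unfolding R2_eq force_step_def[of R1] by blast
  ultimately have "force_step R2 \<subseteq> R2"
    using \<open>T \<subseteq> R1\<close> \<open>R1 \<subseteq> R2\<close> unfolding force_step_def[of R2] by blast
  then have "Force L x T \<subseteq> R2"
    unfolding Force_eq_lfp by (rule lfp_lowerbound)
  then show ?thesis
    using force_iter_subset_Force by (auto simp: R2_def)
qed

lemma regular_confs_Force: "regular_confs (Force L x T)"
  using Force_eq_force_iter regular_confs_force_iter by metis

definition force_guard :: "'s \<times> ('c, 'm) lcs_op \<times> 's \<Rightarrow> ('c \<Rightarrow> 'm list) set" where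
  "force_guard = (\<lambda>(s, op, s'). {w. \<exists>k. (s, w, True) \<in> force_iter (Suc k) - force_iter k \<and>
      w \<in> op_preimage op (slice (force_iter k) s' False)})"

definition avoid_guard :: "'s \<times> ('c, 'm) lcs_op \<times> 's \<Rightarrow> ('c \<Rightarrow> 'm list) set" where
  "avoid_guard = (\<lambda>(s, op, s'). - slice (Force L x T) s True \<inter> op_preimage op (- slice (Force L x T) s' False))"

lemma regular_force_guard: "regular_contents (force_guard t)"
proof -
  obtain s op s' where t: "t = (s, op, s')" by (cases t)
  obtain M where M: "Force L x T = force_iter M"
    using Force_eq_force_iter by blast
  have rank_bound: "k < M" if "c \<in> force_iter (Suc k) - force_iter k" for c k
  proof (rule ccontr)
    assume "\<not> k < M"
    then have "force_iter (Suc k) \<subseteq> force_iter k"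
      using M force_iter_mono[of M k] force_iter_subset_Force by auto
    then show False using that by blast
  qed
  have "force_guard t = (\<Union>k<M. (slice (force_iter (Suc k)) s True - slice (force_iter k) s True) \<inter>
      op_preimage op (slice (force_iter k) s' False))"
  proof (intro equalityI subsetI)
    fix w assume "w \<in> force_guard t"
    then obtain k where k: "(s, w, True) \<in> force_iter (Suc k) - force_iter k"
      "w \<in> op_preimage op (slice (force_iter k) s' False)"
      by (auto simp: force_guard_def t)
    then show "w \<in> (\<Union>k<M. (slice (force_iter (Suc k)) s True - slice (force_iter k) s True) \<inter>
      op_preimage op (slice (force_iter k) s' False))"
      using rank_bound[OF k(1)] by (auto simp: slice_def)
  qed (auto simp: force_guard_def t slice_def)
  then show ?thesis
    using regular_confs_force_iter unfolding regular_confs_iff_slice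
    by (auto intro!: regular_contents_UN regular_contents_Int regular_contents_Diff regular_contents_op_preimage)
qed

lemma regular_avoid_guard: "regular_contents (avoid_guard t)"
  using regular_confs_Force unfolding regular_confs_iff_slice
  by (cases t) (auto simp: avoid_guard_def
      intro!: regular_contents_Int regular_contents_Compl regular_contents_op_preimage)

lemma force_guard_enabled: "force_guard (s, op, s') \<subseteq> op_preimage op UNIV"
  by (auto simp: force_guard_def op_preimage_def)

lemma avoid_guard_enabled: "avoid_guard (s, op, s') \<subseteq> op_preimage op UNIV"
  by (auto simp: avoid_guard_def op_preimage_def)

lemma force_iter_Suc_cases:
  assumes "c \<in> force_iter (Suc k) - force_iter k - T"
  shows "c \<in> rstates L \<inter> Pre L (force_iter k) \<or> c \<in> pstates L x \<inter> Pre L (force_iter k) \<or>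
    c \<in> pstates L (1 - x) \<inter> tPre L (force_iter k)"
  using assms by (auto simp: force_iter_Suc force_step_def)

lemma force_strategy_lowers_rank:
  assumes "induced_strategy (guarded_rules ts force_guard) h = Some c'" "last h = (s, w, True)"
    and rank: "(s, w, True) \<in> force_iter (Suc k) - force_iter k"
  shows "c' \<in> force_iter k"
proof -
  obtain op s' where "w \<in> force_guard (s, op, s')" "c' = (s', op_apply op w, False)"
    using induced_strategy_guarded_rules_SomeD[OF assms(1,2)] by blast
  then obtain j where "(s, w, True) \<in> force_iter (Suc j) - force_iter j" "c' \<in> force_iter j"
    by (auto simp: force_guard_def op_preimage_def slice_def dest: op_rel_op_apply)
  then show ?thesis
    using force_rank_unique[OF rank] by blast
qed

lemma force_strategy_step:
  assumes ts: "set ts = {t \<in> trans L. fst t \<in> ctrl L x}"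
    and f: "total_strategy L x f" "extends_strategy (induced_strategy (guarded_rules ts force_guard)) f"
    and h: "h \<noteq> []" "last h = (s, w, True)" "s \<in> ctrl L x" "last h \<in> force_iter (Suc k) - force_iter k - T"
  shows "\<exists>c'\<in>force_iter k. f h = Some c'"
proof -
  have player: "last h \<in> pstates L x"
    using h(2,3) by (simp add: pstates_def)
  then have "last h \<in> Pre L (force_iter k)"
    using force_iter_Suc_cases[OF h(4)] h(2) ctrl_disjoint[OF h(3)] by (auto simp: pstates_def rstates_def)
  then obtain c0 where c0: "c0 \<in> force_iter k" "edge L (last h) c0"
    by (auto simp: Pre_eq)
  obtain c' where f_h: "f h = Some c'" "edge L (last h) c'"
    using f(1) h(1) player unfolding total_strategy_def is_strategy_def by blast
  have rank: "(s, w, True) \<in> force_iter (Suc k) - force_iter k"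
    using h(2,4) by simp
  have "c' \<in> force_iter k"
  proof (cases "induced_strategy (guarded_rules ts force_guard) h")
    case (Some c1)
    then have "c' = c1"
      using f(2) f_h(1) unfolding extends_strategy_def by (metis option.inject)
    then show ?thesis
      using force_strategy_lowers_rank[OF Some h(2)] rank by simp
  next
    case None
    from c0(2) have "edge L (s, w, True) c0" by (simp add: h(2))
    then consider (move) op s' w' where "(s, op, s') \<in> trans L" "op_rel op w w'" "c0 = (s', w', False)"
      | (blocked) "\<nexists>op t v. (s, op, t) \<in> trans L \<and> op_rel op w v" "c0 = (s, w, False)"
      unfolding edge_player_iff by blast
    then show ?thesis
    proof cases
      case move
      then have "w \<in> force_guard (s, op, s')"
        using rank c0(1) by (auto simp: force_guard_def op_preimage_def slice_def)
      moreover have "(s, op, s') \<in> set ts"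
        using ts move(1) h(3) by simp
      ultimately show ?thesis
        using induced_strategy_guarded_rules_defined[OF h(1,2)] None by blast
    next
      case blocked
      then show ?thesis
        using f_h(2) h(2) c0(1) by (auto simp: edge_player_iff)
    qed
  qed
  then show ?thesis using f_h(1) by blast
qed

lemma edge_into_Force:
  assumes "c \<notin> Force L x T" "edge L c c'" "c' \<in> Force L x T"
  shows "c \<in> pstates L (1 - x)"
proof -
  obtain s w b where c: "c = (s, w, b)" by (cases c)
  have "c \<in> Pre L (Force L x T)" "s \<in> states L"
    using assms edge_confs[OF assms(2)] by (auto simp: Pre_def c confs_def)
  then show ?thesis
    using assms(1) force_step_Force ctrl_cases[of s]
    by (cases b) (auto simp: force_step_def c rstates_def pstates_def)
qed

lemma avoid_strategy_step:
  assumes ts: "set ts = {t \<in> trans L. fst t \<in> ctrl L (1 - x)}"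
    and h: "h \<noteq> []" "last h = (s, w, True)" "s \<in> ctrl L (1 - x)" "last h \<in> confs L - Force L x T"
    and edge: "edge L (last h) c'"
    and consistent: "\<And>c1. induced_strategy (guarded_rules ts avoid_guard) h = Some c1 \<Longrightarrow> c' = c1"
  shows "c' \<notin> Force L x T"
proof -
  have "last h \<notin> tPre L (Force L x T)"
    using h(2-4) force_step_Force by (auto simp: force_step_def pstates_def)
  then obtain c0 where c0: "c0 \<notin> Force L x T" "edge L (last h) c0"
    using h(4) by (auto simp: tPre_def Pre_def)
  from c0(2) have "edge L (s, w, True) c0" by (simp add: h(2))
  then consider (move) op s' w' where "(s, op, s') \<in> trans L" "op_rel op w w'" "c0 = (s', w', False)"
    | (blocked) "\<nexists>op t v. (s, op, t) \<in> trans L \<and> op_rel op w v" "c0 = (s, w, False)"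
    unfolding edge_player_iff by blast
  then show ?thesis
  proof cases
    case move
    then have "w \<in> avoid_guard (s, op, s')"
      using h(2,4) c0(1) by (auto simp: avoid_guard_def op_preimage_def slice_def)
    moreover have "(s, op, s') \<in> set ts"
      using ts move(1) h(3) by simp
    ultimately obtain c1 where "induced_strategy (guarded_rules ts avoid_guard) h = Some c1"
      using induced_strategy_guarded_rules_defined[OF h(1,2)] by blast
    then obtain op1 s1 where "w \<in> avoid_guard (s, op1, s1)" "c' = (s1, op_apply op1 w, False)"
      using induced_strategy_guarded_rules_SomeD[OF _ h(2)] consistent by blast
    then show ?thesis
      by (auto simp: avoid_guard_def op_preimage_def slice_def dest: op_rel_op_apply)
  next
    case blocked
    then show ?thesis
      using edge h(2) c0(1) by (auto simp: edge_player_iff)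
  qed
qed

lemma force_iter_random_step:
  assumes "last h = (s, w, False)" "last h \<in> force_iter (Suc k) - force_iter k - T"
  shows "\<exists>c'\<in>force_iter k. c' \<in> set_pmf (lossy L (last h))"
proof -
  have "last h \<in> Pre L (force_iter k)"
    using force_iter_Suc_cases[OF assms(2)] assms(1) by (auto simp: pstates_def)
  then obtain c' where c': "c' \<in> force_iter k" "edge L (s, w, False) c'"
    using assms(1) by (auto simp: Pre_eq)
  then have "c' \<in> set_pmf (lossy L (last h))"
    using lossy_set_pmf assms(1) by simp
  then show ?thesis
    using c'(1) by blast
qed

lemma force_iter_opponent_step:
  assumes g: "total_strategy L (1 - x) g"
    and h: "h \<noteq> []" "last h = (s, w, True)" "s \<in> ctrl L (1 - x)" "last h \<in> force_iter (Suc k) - force_iter k - T"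
  shows "\<exists>c'\<in>force_iter k. g h = Some c'"
proof -
  have "last h \<in> pstates L (1 - x)"
    using h(2,3) by (simp add: pstates_def)
  then obtain c' where c': "g h = Some c'" "edge L (last h) c'"
    using g h(1) unfolding total_strategy_def is_strategy_def by blast
  have "last h \<in> tPre L (force_iter k)"
    using force_iter_Suc_cases[OF h(4)] h(2,3) ctrl_disjoint by (auto simp: pstates_def rstates_def)
  then have "c' \<in> force_iter k"
    using c'(2) edge_confs[OF c'(2)] unfolding tPre_def Pre_def by blast
  then show ?thesis
    using c'(1) by blast
qed

lemma Force_subset_W_reach:
  assumes ts: "set ts = {t \<in> trans L. fst t \<in> ctrl L x}"
  shows "Force L x T \<subseteq> W_reach L x (induced_strategy (guarded_rules ts force_guard)) T"
proof
  fix c assume c: "c \<in> Force L x T"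
  obtain M where M: "Force L x T = force_iter M"
    using Force_eq_force_iter by blast
  have "0 < reach_prob L x f g T c"
    if f: "total_strategy L x f" "extends_strategy (induced_strategy (guarded_rules ts force_guard)) f"
      and g: "total_strategy L (1 - x) g" for f g
  proof -
    define \<sigma> where "\<sigma> = (\<lambda>y. if y = x then f else g)"
    have "0 < reach_n L \<sigma> T M [c]"
    proof (rule reach_n_pos_ranked[where R = force_iter and k = M])
      fix k h s w
      assume h: "h \<noteq> []" "last h = (s, w, True)" "last h \<in> force_iter (Suc k) - force_iter k - T"
      have "s \<in> states L"
        using h(2,3) force_iter_confs by (auto simp: confs_def)
      then consider "s \<in> ctrl L x" | "s \<in> ctrl L (1 - x)"
        using ctrl_cases by blast
      then show "\<exists>c'\<in>force_iter k. \<sigma> (if s \<in> states0 L then 0 else 1) h = Some c'"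
      proof cases
        case 1
        then show ?thesis
          using force_strategy_step[OF ts f h(1,2) 1 h(3)] mover_eq[OF 1 player_x] by (simp add: \<sigma>_def)
      next
        case 2
        then have "(if s \<in> states0 L then 0 else 1) = 1 - x" "1 - x \<noteq> x"
          using mover_eq[OF 2] player_x by auto
        then show ?thesis
          using force_iter_opponent_step[OF g h(1,2) 2 h(3)] by (simp add: \<sigma>_def)
      qed
    qed (use c M force_iter_random_step in \<open>simp_all add: force_iter_0\<close>)
    then show ?thesis
      unfolding \<sigma>_def by (rule reach_prob_pos)
  qed
  moreover have "c \<in> confs L"
    using c M force_iter_confs by blast
  ultimately show "c \<in> W_reach L x (induced_strategy (guarded_rules ts force_guard)) T"
    unfolding W_reach_def by blast
qed

lemma Avoid_subset_V_safe:
  assumes ts: "set ts = {t \<in> trans L. fst t \<in> ctrl L (1 - x)}"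
  shows "Avoid L x T \<subseteq> V_safe L (1 - x) (induced_strategy (guarded_rules ts avoid_guard)) (confs L - T)"
proof
  fix c assume c: "c \<in> Avoid L x T"
  have "\<rho> i \<in> confs L - Force L x T"
    if run: "is_run L c \<rho>" and consistent: "consistent_run L (induced_strategy (guarded_rules ts avoid_guard)) \<rho>"
    for \<rho> i
  proof (induction i)
    case 0
    then show ?case using c run by (simp add: Avoid_def is_run_def)
  next
    case (Suc i)
    have edge: "edge L (\<rho> i) (\<rho> (Suc i))"
      using run by (simp add: is_run_def)
    have "\<rho> (Suc i) \<notin> Force L x T"
    proof
      assume into: "\<rho> (Suc i) \<in> Force L x T"
      then have "\<rho> i \<in> pstates L (1 - x)"
        using edge_into_Force Suc.IH edge by blast
      then obtain s w where s: "\<rho> i = (s, w, True)" "s \<in> ctrl L (1 - x)"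
        by (auto simp: pstates_def)
      define h where "h = map \<rho> [0..<Suc i]"
      have "h \<noteq> []" "last h = \<rho> i"
        by (simp_all add: h_def)
      moreover have "\<rho> (Suc i) = c1" if "induced_strategy (guarded_rules ts avoid_guard) h = Some c1" for c1
        using consistent that unfolding consistent_run_def h_def by blast
      ultimately show False
        using avoid_strategy_step[OF ts _ _ s(2)] s(1) Suc.IH edge into by auto
    qed
    then show ?case
      using edge_confs[OF edge] by blast
  qed
  then show "c \<in> V_safe L (1 - x) (induced_strategy (guarded_rules ts avoid_guard)) (confs L - T)"
    using c T_subset_Force unfolding V_safe_def Avoid_def by blast
qed

end

theorem mainTheorem18:
  fixes L :: "('s, 'c::finite, 'm::finite) sglcs" and x :: nat and T :: "('s, 'c, 'm) conf set"
  assumes "wf_sglcs L" and "x \<in> {0, 1}" and "T \<subseteq> confs L" and "regular_confs T"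
  shows "\<exists>rf ra. regular_strategy L x rf \<and> regular_strategy L (1 - x) ra \<and>
           Force L x T \<subseteq> W_reach L x (induced_strategy rf) T \<and>
           Avoid L x T \<subseteq> V_safe L (1 - x) (induced_strategy ra) (confs L - T)"
proof -
  interpret force_game L x T
    using assms by unfold_locales
  have finite: "finite {t \<in> trans L. fst t \<in> ctrl L y}" for y
    using assms(1) by (simp add: wf_sglcs_def)
  obtain ts_x where ts_x: "set ts_x = {t \<in> trans L. fst t \<in> ctrl L x}"
    using finite_list[OF finite] by blast
  obtain ts_y where ts_y: "set ts_y = {t \<in> trans L. fst t \<in> ctrl L (1 - x)}"
    using finite_list[OF finite] by blast
  have "regular_strategy L x (guarded_rules ts_x force_guard)"
    by (rule regular_strategy_guarded_rules) (simp_all add: ts_x regular_force_guard force_guard_enabled)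
  moreover have "regular_strategy L (1 - x) (guarded_rules ts_y avoid_guard)"
    by (rule regular_strategy_guarded_rules) (simp_all add: ts_y regular_avoid_guard avoid_guard_enabled)
  ultimately show ?thesis
    using Force_subset_W_reach[OF ts_x] Avoid_subset_V_safe[OF ts_y] by blast
qed

end
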